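(* Let $Q$ be a finite (right or left) Bol loop of odd order and let $H$ be a normal subloop of $Q$ of order $3$. Then $H\le Z(Q)$.
   Context: A loop is a set with a binary multiplication and a two-sided identity $1$ in which all left and right translations are bijections. A loop is right Bol if it satisfies $((xy)z)y=x((yz)y)$, left Bol if it satisfies $y(z(yx))=(y(zy))x$. A subloop is normal if it is invariant under the inner mapping group (the stabilizer of $1$ in the group generated by all left and right translations). The nucleus $N(Q)$ is the set of $x\in Q$ with $x\cdot yz=xy\cdot z$, $y\cdot xz=yx\cdot z$, $y\cdot zx=yz\cdot x$ for all $y,z$; the center is $Z(Q)=\{x\in N(Q): xy=yx\text{ for all }y\in Q\}$. *)

theory Defs
  imports Main
begin

definition loop :: "'a set \<Rightarrow> ('a \<Rightarrow> 'a \<Rightarrow> 'a) \<Rightarrow> 'a \<Rightarrow> bool" where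
  "loop Q m e \<longleftrightarrow> e \<in> Q \<and> (\<forall>x\<in>Q. \<forall>y\<in>Q. m x y \<in> Q)
     \<and> (\<forall>x\<in>Q. m e x = x \<and> m x e = x)
     \<and> (\<forall>x\<in>Q. bij_betw (\<lambda>y. m x y) Q Q \<and> bij_betw (\<lambda>y. m y x) Q Q)"

definition right_bol :: "'a set \<Rightarrow> ('a \<Rightarrow> 'a \<Rightarrow> 'a) \<Rightarrow> bool" where
  "right_bol Q m \<longleftrightarrow> (\<forall>x\<in>Q. \<forall>y\<in>Q. \<forall>z\<in>Q. m (m (m x y) z) y = m x (m (m y z) y))"

definition left_bol :: "'a set \<Rightarrow> ('a \<Rightarrow> 'a \<Rightarrow> 'a) \<Rightarrow> bool" where
  "left_bol Q m \<longleftrightarrow> (\<forall>x\<in>Q. \<forall>y\<in>Q. \<forall>z\<in>Q. m y (m z (m y x)) = m (m y (m z y)) x)"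

definition ltrans :: "'a set \<Rightarrow> ('a \<Rightarrow> 'a \<Rightarrow> 'a) \<Rightarrow> 'a \<Rightarrow> 'a \<Rightarrow> 'a" where
  "ltrans Q m x = (\<lambda>y. if y \<in> Q then m x y else y)"

definition rtrans :: "'a set \<Rightarrow> ('a \<Rightarrow> 'a \<Rightarrow> 'a) \<Rightarrow> 'a \<Rightarrow> 'a \<Rightarrow> 'a" where
  "rtrans Q m x = (\<lambda>y. if y \<in> Q then m y x else y)"

definition ltrans_inv :: "'a set \<Rightarrow> ('a \<Rightarrow> 'a \<Rightarrow> 'a) \<Rightarrow> 'a \<Rightarrow> 'a \<Rightarrow> 'a" where
  "ltrans_inv Q m x = (\<lambda>y. if y \<in> Q then (THE z. z \<in> Q \<and> m x z = y) else y)"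

definition rtrans_inv :: "'a set \<Rightarrow> ('a \<Rightarrow> 'a \<Rightarrow> 'a) \<Rightarrow> 'a \<Rightarrow> 'a \<Rightarrow> 'a" where
  "rtrans_inv Q m x = (\<lambda>y. if y \<in> Q then (THE z. z \<in> Q \<and> m z x = y) else y)"

inductive_set mlt_group :: "'a set \<Rightarrow> ('a \<Rightarrow> 'a \<Rightarrow> 'a) \<Rightarrow> ('a \<Rightarrow> 'a) set"
  for Q m where
  mlt_id: "id \<in> mlt_group Q m"
| mlt_L: "x \<in> Q \<Longrightarrow> f \<in> mlt_group Q m \<Longrightarrow> ltrans Q m x \<circ> f \<in> mlt_group Q m"
| mlt_R: "x \<in> Q \<Longrightarrow> f \<in> mlt_group Q m \<Longrightarrow> rtrans Q m x \<circ> f \<in> mlt_group Q m"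
| mlt_Linv: "x \<in> Q \<Longrightarrow> f \<in> mlt_group Q m \<Longrightarrow> ltrans_inv Q m x \<circ> f \<in> mlt_group Q m"
| mlt_Rinv: "x \<in> Q \<Longrightarrow> f \<in> mlt_group Q m \<Longrightarrow> rtrans_inv Q m x \<circ> f \<in> mlt_group Q m"

definition inn_group :: "'a set \<Rightarrow> ('a \<Rightarrow> 'a \<Rightarrow> 'a) \<Rightarrow> 'a \<Rightarrow> ('a \<Rightarrow> 'a) set" where
  "inn_group Q m e = {f \<in> mlt_group Q m. f e = e}"

definition subloop :: "'a set \<Rightarrow> 'a set \<Rightarrow> ('a \<Rightarrow> 'a \<Rightarrow> 'a) \<Rightarrow> 'a \<Rightarrow> bool" where
  "subloop H Q m e \<longleftrightarrow> H \<subseteq> Q \<and> e \<in> H \<and> (\<forall>x\<in>H. \<forall>y\<in>H. m x y \<in> H)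
     \<and> (\<forall>a\<in>H. \<forall>b\<in>H. \<forall>z\<in>Q. (m a z = b \<longrightarrow> z \<in> H) \<and> (m z a = b \<longrightarrow> z \<in> H))"

definition normal_subloop :: "'a set \<Rightarrow> 'a set \<Rightarrow> ('a \<Rightarrow> 'a \<Rightarrow> 'a) \<Rightarrow> 'a \<Rightarrow> bool" where
  "normal_subloop H Q m e \<longleftrightarrow> subloop H Q m e \<and> (\<forall>f \<in> inn_group Q m e. f ` H = H)"

definition nucleus :: "'a set \<Rightarrow> ('a \<Rightarrow> 'a \<Rightarrow> 'a) \<Rightarrow> 'a set" where
  "nucleus Q m = {x \<in> Q. \<forall>y\<in>Q. \<forall>z\<in>Q. m x (m y z) = m (m x y) z
      \<and> m y (m x z) = m (m y x) z \<and> m y (m z x) = m (m y z) x}"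

definition center :: "'a set \<Rightarrow> ('a \<Rightarrow> 'a \<Rightarrow> 'a) \<Rightarrow> 'a set" where
  "center Q m = {x \<in> nucleus Q m. \<forall>y\<in>Q. m x y = m y x}"

end

theory Submission
  imports Defs
begin

text \<open>Write \<open>H = {1, h, h\<^sup>2}\<close>. Normality of \<open>H\<close> means that every translation carries left
  cosets of \<open>H\<close> onto left cosets, so on each coset it either commutes with left multiplication
  by \<open>h\<close> or interchanges \<open>h\<close> and \<open>h\<^sup>2\<close>. In a right Bol loop fix \<open>y\<close> and record, for the
  left translation by \<open>y\<^sup>i\<close> on the coset \<open>H y\<close>, which of the two happens. The right alternative
  law shows that this record is constant or alternating in \<open>i\<close>; it agrees at \<open>0\<close> and at the
  order of \<open>y\<close>, which divides \<open>|Q|\<close> and is therefore odd, so it is constant, and the right Bol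
  law then yields \<open>y h = h y\<close>. Combined once more with the Bol law and the dichotomy, this makes
  \<open>h\<close> associate with everything, so \<open>h\<close> is central. Left Bol loops are handled by passing to
  the opposite loop.\<close>

section \<open>Loops and normal subloops\<close>

lemma normal_subloop_subset: "normal_subloop H Q m e \<Longrightarrow> H \<subseteq> Q"
  unfolding normal_subloop_def subloop_def by blast

locale loop_on =
  fixes Q :: "'a set" and mult :: "'a \<Rightarrow> 'a \<Rightarrow> 'a" (infixl "\<cdot>" 70) and e :: 'a
  assumes loop: "loop Q (\<cdot>) e"
begin

lemma unit_closed: "e \<in> Q"
  using loop unfolding loop_def by blast

lemma mult_closed: "x \<in> Q \<Longrightarrow> y \<in> Q \<Longrightarrow> x \<cdot> y \<in> Q"
  using loop unfolding loop_def by blast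

lemma left_unit [simp]: "x \<in> Q \<Longrightarrow> e \<cdot> x = x"
  using loop unfolding loop_def by blast

lemma right_unit [simp]: "x \<in> Q \<Longrightarrow> x \<cdot> e = x"
  using loop unfolding loop_def by blast

lemma bij_left_mult: "x \<in> Q \<Longrightarrow> bij_betw (\<lambda>y. x \<cdot> y) Q Q"
  using loop unfolding loop_def by blast

lemma bij_right_mult: "x \<in> Q \<Longrightarrow> bij_betw (\<lambda>y. y \<cdot> x) Q Q"
  using loop unfolding loop_def by blast

lemma left_cancel: "x \<in> Q \<Longrightarrow> y \<in> Q \<Longrightarrow> z \<in> Q \<Longrightarrow> x \<cdot> y = x \<cdot> z \<Longrightarrow> y = z"
  using bij_left_mult[of x] unfolding bij_betw_def inj_on_def by blast

lemma right_cancel: "x \<in> Q \<Longrightarrow> y \<in> Q \<Longrightarrow> z \<in> Q \<Longrightarrow> y \<cdot> x = z \<cdot> x \<Longrightarrow> y = z"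
  using bij_right_mult[of x] unfolding bij_betw_def inj_on_def by blast

lemma ex1_left_divide: "x \<in> Q \<Longrightarrow> y \<in> Q \<Longrightarrow> \<exists>!z. z \<in> Q \<and> x \<cdot> z = y"
  using bij_left_mult[of x] left_cancel[of x] unfolding bij_betw_def by (metis imageE)

lemma ex1_right_divide: "x \<in> Q \<Longrightarrow> y \<in> Q \<Longrightarrow> \<exists>!z. z \<in> Q \<and> z \<cdot> x = y"
  using bij_right_mult[of x] right_cancel[of x] unfolding bij_betw_def by (metis imageE)

lemma ltrans_inv_closed: "x \<in> Q \<Longrightarrow> y \<in> Q \<Longrightarrow> ltrans_inv Q (\<cdot>) x y \<in> Q"
  using theI'[OF ex1_left_divide[of x y]] unfolding ltrans_inv_def by simp

lemma rtrans_inv_closed: "x \<in> Q \<Longrightarrow> y \<in> Q \<Longrightarrow> rtrans_inv Q (\<cdot>) x y \<in> Q"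
  and rtrans_inv_mult: "x \<in> Q \<Longrightarrow> y \<in> Q \<Longrightarrow> rtrans_inv Q (\<cdot>) x y \<cdot> x = y"
  using theI'[OF ex1_right_divide[of x y]] unfolding rtrans_inv_def by simp_all

lemma unit_in_center: "e \<in> center Q (\<cdot>)"
  unfolding center_def nucleus_def using unit_closed by (simp add: mult_closed)

lemma mlt_group_closed: "f \<in> mlt_group Q (\<cdot>) \<Longrightarrow> x \<in> Q \<Longrightarrow> f x \<in> Q"
  by (induction arbitrary: x rule: mlt_group.induct)
     (auto simp: ltrans_def rtrans_def mult_closed ltrans_inv_closed rtrans_inv_closed)

lemma inner_mapping_preserves_normal:
  assumes "normal_subloop H Q (\<cdot>) e" "f \<in> mlt_group Q (\<cdot>)" "f e = e" "k \<in> H"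
  shows "f k \<in> H"
  using assms unfolding normal_subloop_def inn_group_def by blast

text \<open>Composing \<open>f\<close> with the inverse right translation by \<open>f e\<close> gives an inner mapping.\<close>

lemma mlt_group_left_coset:
  assumes H: "normal_subloop H Q (\<cdot>) e" and f: "f \<in> mlt_group Q (\<cdot>)" and k: "k \<in> H"
  shows "\<exists>k'\<in>H. f k = k' \<cdot> f e"
proof -
  have fe: "f e \<in> Q" using mlt_group_closed[OF f unit_closed] .
  have kQ: "k \<in> Q" using normal_subloop_subset[OF H] k by blast
  define g where "g = rtrans_inv Q (\<cdot>) (f e) \<circ> f"
  have "g \<in> mlt_group Q (\<cdot>)" unfolding g_def using fe f by (rule mlt_Rinv)
  moreover have "g e = e"
    using rtrans_inv_mult[OF fe fe] rtrans_inv_closed[OF fe fe] right_cancel[OF fe _ unit_closed]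
    by (simp add: g_def fe)
  ultimately have "g k \<in> H" using inner_mapping_preserves_normal[OF H _ _ k] by blast
  moreover have "g k \<cdot> f e = f k"
    using rtrans_inv_mult[OF fe mlt_group_closed[OF f kQ]] by (simp add: g_def)
  ultimately show ?thesis by metis
qed

lemma normal_left_mult_coset:
  assumes H: "normal_subloop H Q (\<cdot>) e" and x: "x \<in> Q" and z: "z \<in> Q" and k: "k \<in> H"
  shows "\<exists>k'\<in>H. x \<cdot> (k \<cdot> z) = k' \<cdot> (x \<cdot> z)"
proof -
  let ?f = "ltrans Q (\<cdot>) x \<circ> (rtrans Q (\<cdot>) z \<circ> id)"
  have "?f \<in> mlt_group Q (\<cdot>)" using x z by (intro mlt_group.intros)
  moreover have "?f k = x \<cdot> (k \<cdot> z)" and "?f e = x \<cdot> z"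
    using normal_subloop_subset[OF H] k x z unit_closed mult_closed by (auto simp: ltrans_def rtrans_def)
  ultimately show ?thesis using mlt_group_left_coset[OF H _ k] by metis
qed

lemma normal_right_mult_coset:
  assumes H: "normal_subloop H Q (\<cdot>) e" and x: "x \<in> Q" and z: "z \<in> Q" and k: "k \<in> H"
  shows "\<exists>k'\<in>H. (k \<cdot> z) \<cdot> x = k' \<cdot> (z \<cdot> x)"
proof -
  let ?f = "rtrans Q (\<cdot>) x \<circ> (rtrans Q (\<cdot>) z \<circ> id)"
  have "?f \<in> mlt_group Q (\<cdot>)" using x z by (intro mlt_group.intros)
  moreover have "?f k = (k \<cdot> z) \<cdot> x" and "?f e = z \<cdot> x"
    using normal_subloop_subset[OF H] k x z unit_closed mult_closed by (auto simp: ltrans_def rtrans_def)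
  ultimately show ?thesis using mlt_group_left_coset[OF H _ k] by metis
qed

end

section \<open>Powers in right Bol loops\<close>

locale right_bol_loop = loop_on +
  assumes right_bol: "right_bol Q (\<cdot>)"
begin

lemma right_bol_law: "x \<in> Q \<Longrightarrow> y \<in> Q \<Longrightarrow> z \<in> Q \<Longrightarrow> ((x \<cdot> y) \<cdot> z) \<cdot> y = x \<cdot> ((y \<cdot> z) \<cdot> y)"
  using right_bol unfolding right_bol_def by blast

lemma right_alternative: "x \<in> Q \<Longrightarrow> y \<in> Q \<Longrightarrow> (x \<cdot> y) \<cdot> y = x \<cdot> (y \<cdot> y)"
  using right_bol_law[of x y e] by (simp add: unit_closed mult_closed)

definition rpow :: "'a \<Rightarrow> nat \<Rightarrow> 'a" where
  "rpow y n = ((\<lambda>z. z \<cdot> y) ^^ n) e"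

lemma rpow_0 [simp]: "rpow y 0 = e"
  by (simp add: rpow_def)

lemma rpow_Suc: "rpow y (Suc n) = rpow y n \<cdot> y"
  by (simp add: rpow_def)

lemma funpow_right_mult_closed: "y \<in> Q \<Longrightarrow> z \<in> Q \<Longrightarrow> ((\<lambda>z. z \<cdot> y) ^^ n) z \<in> Q"
  by (induction n) (auto simp: mult_closed)

lemma rpow_closed: "y \<in> Q \<Longrightarrow> rpow y n \<in> Q"
  unfolding rpow_def using funpow_right_mult_closed unit_closed by blast

lemma rpow_1 [simp]: "y \<in> Q \<Longrightarrow> rpow y 1 = y" "y \<in> Q \<Longrightarrow> rpow y (Suc 0) = y"
  by (simp_all add: rpow_def)

lemma mult_rpow: "y \<in> Q \<Longrightarrow> z \<in> Q \<Longrightarrow> z \<cdot> rpow y n = ((\<lambda>z. z \<cdot> y) ^^ n) z"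
proof (induction n arbitrary: z rule: nat_induct2)
  case (step n)
  have "rpow y (Suc n) = ((\<lambda>z. z \<cdot> y) ^^ n) y"
    using step by (simp add: rpow_def funpow_Suc_right del: funpow.simps)
  also have "\<dots> = y \<cdot> rpow y n"
    using step by simp
  finally have "rpow y (Suc n) = y \<cdot> rpow y n" .
  then have "z \<cdot> rpow y (n + 2) = z \<cdot> ((y \<cdot> rpow y n) \<cdot> y)"
    by (simp add: rpow_Suc)
  also have "\<dots> = ((z \<cdot> y) \<cdot> rpow y n) \<cdot> y"
    using step by (simp add: right_bol_law rpow_closed)
  also have "\<dots> = ((\<lambda>z. z \<cdot> y) ^^ Suc n) (z \<cdot> y)"
    using step by (simp add: mult_closed)
  also have "\<dots> = ((\<lambda>z. z \<cdot> y) ^^ (n + 2)) z"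
    by (simp only: add_2_eq_Suc' funpow_Suc_right comp_apply)
  finally show ?case .
qed (simp_all add: rpow_def)

lemma mult_rpow_add:
  assumes "y \<in> Q" "z \<in> Q" shows "(z \<cdot> rpow y a) \<cdot> rpow y b = z \<cdot> rpow y (a + b)"
proof -
  have "(z \<cdot> rpow y a) \<cdot> rpow y b = ((\<lambda>z. z \<cdot> y) ^^ b) (((\<lambda>z. z \<cdot> y) ^^ a) z)"
    using assms by (simp add: mult_rpow funpow_right_mult_closed)
  also have "\<dots> = ((\<lambda>z. z \<cdot> y) ^^ (b + a)) z"
    by (simp only: funpow_add comp_apply)
  also have "\<dots> = z \<cdot> rpow y (a + b)"
    using assms by (simp add: mult_rpow add.commute)
  finally show ?thesis .
qed

lemma rpow_add: "y \<in> Q \<Longrightarrow> rpow y a \<cdot> rpow y b = rpow y (a + b)"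
  using mult_rpow_add[of y e a b] by (simp add: unit_closed rpow_closed)

lemma rpow_diff_eq_unit:
  assumes "y \<in> Q" "a \<le> b" "rpow y a = rpow y b"
  shows "rpow y (b - a) = e"
proof -
  have "rpow y a \<cdot> rpow y (b - a) = rpow y a \<cdot> e"
    using assms rpow_add[of y a "b - a"] by (simp add: rpow_closed)
  then show ?thesis
    using assms(1) left_cancel rpow_closed unit_closed by blast
qed

end

locale finite_right_bol_loop = right_bol_loop +
  assumes finite: "finite Q"
begin

lemma rpow_period_exists:
  assumes y: "y \<in> Q" shows "\<exists>n>0. rpow y n = e"
proof -
  have "\<not> inj_on (rpow y) {0..card Q}"
  proof
    assume "inj_on (rpow y) {0..card Q}"
    then have "card {0..card Q} \<le> card Q"
      using card_inj_on_le[of "rpow y" _ Q] finite rpow_closed[OF y] by blast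
    then show False by simp
  qed
  then obtain a b where "a < b" "rpow y a = rpow y b"
    unfolding inj_on_def by (metis linorder_neqE_nat)
  then show ?thesis
    using rpow_diff_eq_unit[OF y, of a b] by (intro exI[of _ "b - a"]) auto
qed

definition rorder :: "'a \<Rightarrow> nat" where
  "rorder y = (LEAST n. 0 < n \<and> rpow y n = e)"

lemma rorder_pos: "y \<in> Q \<Longrightarrow> 0 < rorder y"
  and rpow_rorder: "y \<in> Q \<Longrightarrow> rpow y (rorder y) = e"
  using LeastI_ex[OF rpow_period_exists] unfolding rorder_def by auto

lemma rpow_ne_unit_below_rorder: "0 < n \<Longrightarrow> n < rorder y \<Longrightarrow> rpow y n \<noteq> e"
  unfolding rorder_def using not_less_Least by blast

lemma rpow_mult_rorder: "y \<in> Q \<Longrightarrow> rpow y (rorder y * q) = e"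
proof (induction q)
  case (Suc q)
  then show ?case
    using rpow_add[of y "rorder y * q" "rorder y"] by (simp add: rpow_rorder add.commute unit_closed)
qed simp

lemma rpow_mod_rorder: "y \<in> Q \<Longrightarrow> rpow y n = rpow y (n mod rorder y)"
  using rpow_add[of y "n mod rorder y" "rorder y * (n div rorder y)"]
  by (simp add: rpow_mult_rorder rpow_closed)

lemma inj_on_mult_rpow:
  assumes y: "y \<in> Q" and z: "z \<in> Q" shows "inj_on (\<lambda>n. z \<cdot> rpow y n) {..<rorder y}"
proof (rule inj_onI)
  have neq: "rpow y a \<noteq> rpow y b" if "a < b" "b < rorder y" for a b
    using rpow_diff_eq_unit[OF y, of a b] rpow_ne_unit_below_rorder[of "b - a" y] that by auto
  fix a b assume "a \<in> {..<rorder y}" "b \<in> {..<rorder y}" "z \<cdot> rpow y a = z \<cdot> rpow y b"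
  then show "a = b"
    using left_cancel[OF z] rpow_closed[OF y] neq by (metis lessThan_iff linorder_neqE_nat)
qed

definition right_coset_rel :: "'a \<Rightarrow> ('a \<times> 'a) set" where
  "right_coset_rel y = {(z, w). z \<in> Q \<and> (\<exists>n. w = z \<cdot> rpow y n)}"

lemma right_coset_rel_class:
  assumes y: "y \<in> Q" and z: "z \<in> Q"
  shows "right_coset_rel y `` {z} = (\<lambda>n. z \<cdot> rpow y n) ` {..<rorder y}"
proof -
  have "z \<cdot> rpow y n \<in> (\<lambda>n. z \<cdot> rpow y n) ` {..<rorder y}" for n
    using rpow_mod_rorder[OF y, of n] rorder_pos[OF y] by (metis image_eqI lessThan_iff mod_less_divisor)
  then show ?thesis
    using z unfolding right_coset_rel_def by auto
qed

lemma right_coset_relI: "z \<in> Q \<Longrightarrow> (z, z \<cdot> rpow y n) \<in> right_coset_rel y"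
  unfolding right_coset_rel_def by blast

lemma right_coset_relE:
  assumes "(z, w) \<in> right_coset_rel y"
  obtains n where "z \<in> Q" "w = z \<cdot> rpow y n"
  using assms unfolding right_coset_rel_def by blast

lemma equiv_right_coset_rel: assumes y: "y \<in> Q" shows "equiv Q (right_coset_rel y)"
proof (rule equivI)
  show "right_coset_rel y \<subseteq> Q \<times> Q"
    using mult_closed rpow_closed[OF y] by (auto elim: right_coset_relE)
  show "refl_on Q (right_coset_rel y)"
    using right_coset_relI[of _ y 0] by (intro refl_onI) simp
  show "sym (right_coset_rel y)"
  proof (rule symI)
    fix z w assume "(z, w) \<in> right_coset_rel y"
    then obtain n where z: "z \<in> Q" and w: "w = z \<cdot> rpow y n"
      by (rule right_coset_relE)
    have "n + (rorder y - 1) * n = rorder y * n"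
      using rorder_pos[OF y] by (cases "rorder y") simp_all
    then have "z = w \<cdot> rpow y ((rorder y - 1) * n)"
      using mult_rpow_add[OF y z] w z by (simp add: rpow_mult_rorder[OF y])
    moreover have "w \<in> Q"
      using w z y by (simp add: mult_closed rpow_closed)
    ultimately show "(w, z) \<in> right_coset_rel y"
      using right_coset_relI[of w y] by simp
  qed
  show "trans (right_coset_rel y)"
  proof (rule transI)
    fix u v w assume "(u, v) \<in> right_coset_rel y" "(v, w) \<in> right_coset_rel y"
    then obtain a b where u: "u \<in> Q" and "v = u \<cdot> rpow y a" "w = v \<cdot> rpow y b"
      by (metis right_coset_relE)
    then have "w = u \<cdot> rpow y (a + b)"
      using mult_rpow_add[OF y u] by simp
    with u show "(u, w) \<in> right_coset_rel y"
      using right_coset_relI by simp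
  qed
qed

lemma rorder_dvd_card: assumes y: "y \<in> Q" shows "rorder y dvd card Q"
proof (rule equiv_imp_dvd_card[OF finite equiv_right_coset_rel[OF y]])
  fix X assume "X \<in> Q // right_coset_rel y"
  then obtain z where "z \<in> Q" "X = right_coset_rel y `` {z}"
    unfolding quotient_def by blast
  then show "rorder y dvd card X"
    using right_coset_rel_class[OF y] card_image[OF inj_on_mult_rpow[OF y]] by simp
qed

lemma odd_rorder: "y \<in> Q \<Longrightarrow> odd (card Q) \<Longrightarrow> odd (rorder y)"
  using rorder_dvd_card dvd_trans by blast

end

section \<open>Normal subloops of order 3\<close>

locale order3_normal = loop_on +
  fixes H :: "'a set" and h :: 'a
  assumes normal: "normal_subloop H Q (\<cdot>) e"
    and card_H: "card H = 3"
    and h_in_H: "h \<in> H"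
    and h_ne_unit: "h \<noteq> e"
begin

definition h2 :: 'a where
  "h2 = h \<cdot> h"

lemma H_subset: "H \<subseteq> Q"
  using normal by (rule normal_subloop_subset)

lemma unit_in_H: "e \<in> H"
  and H_mult_closed: "a \<in> H \<Longrightarrow> b \<in> H \<Longrightarrow> a \<cdot> b \<in> H"
  using normal unfolding normal_subloop_def subloop_def by blast+

lemma h_closed: "h \<in> Q"
  using h_in_H H_subset by blast

lemma h_mult_h: "h \<cdot> h = h2"
  by (simp add: h2_def)

lemma h2_in_H: "h2 \<in> H"
  unfolding h2_def using H_mult_closed h_in_H by blast

lemma h2_closed: "h2 \<in> Q"
  using h2_in_H H_subset by blast

lemma H_eq_triple:
  assumes "a \<in> H" "b \<in> H" "c \<in> H" "a \<noteq> b" "a \<noteq> c" "b \<noteq> c"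
  shows "H = {a, b, c}"
proof -
  have "finite H"
    using card_H by (metis card.infinite zero_neq_numeral)
  moreover have "card {a, b, c} = card H"
    using assms card_H by simp
  ultimately show ?thesis
    using assms by (metis card_subset_eq empty_subsetI insert_subset)
qed

lemma h2_ne_h: "h2 \<noteq> h"
  unfolding h2_def using left_cancel[OF h_closed h_closed unit_closed] h_closed h_ne_unit by auto

lemma h2_ne_unit: "h2 \<noteq> e"
proof
  assume hh: "h2 = e"
  obtain g where g: "g \<in> H" "g \<noteq> e" "g \<noteq> h"
  proof -
    have "card {e, h} \<le> 2"
      by (simp add: card_insert_if)
    then have "H \<noteq> {e, h}"
      using card_H by auto
    then show ?thesis
      using that unit_in_H h_in_H by blast
  qed
  have gQ: "g \<in> Q" using g H_subset by blast
  have "h \<cdot> g \<in> H" using H_mult_closed h_in_H g by blast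
  moreover have "H = {e, h, g}" using H_eq_triple[OF unit_in_H h_in_H g(1)] h_ne_unit g by simp
  moreover have "h \<cdot> g \<noteq> h" using left_cancel[OF h_closed gQ unit_closed] h_closed g by auto
  moreover have "h \<cdot> g \<noteq> e" using left_cancel[OF h_closed gQ h_closed] hh g by (auto simp: h2_def)
  moreover have "h \<cdot> g \<noteq> g" using right_cancel[OF gQ h_closed unit_closed] gQ h_ne_unit by auto
  ultimately show False by blast
qed

lemma H_eq: "H = {e, h, h2}"
  using H_eq_triple[OF unit_in_H h_in_H h2_in_H] h_ne_unit h2_ne_unit h2_ne_h by simp

lemma h_mult_h2: "h \<cdot> h2 = e"
proof -
  have "h \<cdot> h2 \<in> H" using H_mult_closed h_in_H h2_in_H by blast
  moreover have "h \<cdot> h2 \<noteq> h" using left_cancel[OF h_closed h2_closed unit_closed] h_closed h2_ne_unit by auto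
  moreover have "h \<cdot> h2 \<noteq> h2" using right_cancel[OF h2_closed h_closed unit_closed] h2_closed h_ne_unit by auto
  ultimately show ?thesis using H_eq by blast
qed

lemma h2_mult_h: "h2 \<cdot> h = e"
proof -
  have "h2 \<cdot> h \<in> H" using H_mult_closed h_in_H h2_in_H by blast
  moreover have "h2 \<cdot> h \<noteq> h2" using left_cancel[OF h2_closed h_closed unit_closed] h2_closed h_ne_unit by auto
  moreover have "h2 \<cdot> h \<noteq> h" using right_cancel[OF h_closed h2_closed unit_closed] h_closed h2_ne_unit by auto
  ultimately show ?thesis using H_eq by blast
qed

lemma h2_mult_h2: "h2 \<cdot> h2 = h"
proof -
  have "h2 \<cdot> h2 \<in> H" using H_mult_closed h2_in_H by blast
  moreover have "h2 \<cdot> h2 \<noteq> h2" using left_cancel[OF h2_closed h2_closed unit_closed] h2_closed h2_ne_unit by auto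
  moreover have "h2 \<cdot> h2 \<noteq> e" using left_cancel[OF h2_closed h2_closed h_closed] h2_mult_h h2_ne_h by auto
  ultimately show ?thesis using H_eq by blast
qed

lemma h_mult_ne: "z \<in> Q \<Longrightarrow> h \<cdot> z \<noteq> z"
  and h2_mult_ne: "z \<in> Q \<Longrightarrow> h2 \<cdot> z \<noteq> z"
  and h_mult_ne_h2_mult: "z \<in> Q \<Longrightarrow> h \<cdot> z \<noteq> h2 \<cdot> z"
  using right_cancel[of z h e] right_cancel[of z h2 e] right_cancel[of z h h2]
    h_closed h2_closed unit_closed h_ne_unit h2_ne_unit h2_ne_h by auto

lemma h_mult_h_mult: assumes z: "z \<in> Q" shows "h \<cdot> (h \<cdot> z) = h2 \<cdot> z"
proof -
  obtain k where k: "k \<in> H" "h2 \<cdot> z = k \<cdot> (h \<cdot> z)"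
    using normal_right_mult_coset[OF normal z h_closed h_in_H] unfolding h2_def by blast
  have hz: "h \<cdot> z \<in> Q" using mult_closed h_closed z by blast
  have "k \<noteq> e" using k hz h_mult_ne_h2_mult[OF z] by auto
  moreover have "k \<noteq> h2" using k left_cancel[OF h2_closed z hz] h_mult_ne[OF z] by auto
  ultimately show ?thesis using k H_eq by auto
qed

lemma h2_mult_h_mult: assumes z: "z \<in> Q" shows "h2 \<cdot> (h \<cdot> z) = z"
proof -
  obtain k where k: "k \<in> H" "(h2 \<cdot> h) \<cdot> z = k \<cdot> (h \<cdot> z)"
    using normal_right_mult_coset[OF normal z h_closed h2_in_H] by blast
  then have kz: "z = k \<cdot> (h \<cdot> z)" using h2_mult_h z by simp
  have "k \<noteq> e" using kz z h_mult_ne[OF z] mult_closed h_closed by auto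
  moreover have "k \<noteq> h" using kz h_mult_h_mult[OF z] h2_mult_ne[OF z] by auto
  ultimately show ?thesis using k kz H_eq by auto
qed

lemma h_mult_h2_mult: assumes z: "z \<in> Q" shows "h \<cdot> (h2 \<cdot> z) = z"
proof -
  obtain k where k: "k \<in> H" "(h \<cdot> h2) \<cdot> z = k \<cdot> (h2 \<cdot> z)"
    using normal_right_mult_coset[OF normal z h2_closed h_in_H] by blast
  then have kz: "z = k \<cdot> (h2 \<cdot> z)" using h_mult_h2 z by simp
  have h2z: "h2 \<cdot> z \<in> Q" using mult_closed h2_closed z by blast
  have "k \<noteq> e" using kz h2z h2_mult_ne[OF z] by auto
  moreover have "k \<noteq> h2"
  proof
    assume "k = h2"
    then have "h2 \<cdot> (h \<cdot> z) = h2 \<cdot> (h2 \<cdot> z)" using kz h2_mult_h_mult[OF z] by simp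
    then show False
      using left_cancel[OF h2_closed _ h2z] mult_closed h_closed z h_mult_ne_h2_mult[OF z] by blast
  qed
  ultimately show ?thesis using k kz H_eq by auto
qed

lemma h2_mult_h2_mult: "z \<in> Q \<Longrightarrow> h2 \<cdot> (h2 \<cdot> z) = h \<cdot> z"
  using h_mult_h_mult h2_mult_h_mult[of "h \<cdot> z"] mult_closed h_closed by metis

lemma H_mult_assoc:
  assumes a: "a \<in> H" and b: "b \<in> H" and z: "z \<in> Q"
  shows "a \<cdot> (b \<cdot> z) = (a \<cdot> b) \<cdot> z"
  using a b H_eq H_subset z mult_closed
  by (auto simp: h_mult_h_mult h2_mult_h_mult h_mult_h2_mult h2_mult_h2_mult
      h_mult_h2 h2_mult_h h2_mult_h2 h2_def[symmetric])

text \<open>Injectivity of \<open>g\<close> forces the multipliers of \<open>h z\<close> and \<open>h2 z\<close> to be distinct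
  elements of \<open>H - {e} = {h, h2}\<close>.\<close>

lemma coset_map_dichotomy:
  assumes g_coset: "\<And>k. k \<in> H \<Longrightarrow> \<exists>k'\<in>H. g (k \<cdot> z) = k' \<cdot> g z"
    and g_inj: "inj_on g Q" and z: "z \<in> Q" and gz: "g z \<in> Q"
  shows "(g (h \<cdot> z) = h \<cdot> g z \<and> g (h2 \<cdot> z) = h2 \<cdot> g z) \<or>
         (g (h \<cdot> z) = h2 \<cdot> g z \<and> g (h2 \<cdot> z) = h \<cdot> g z)"
proof -
  obtain k1 where k1: "k1 \<in> H" "g (h \<cdot> z) = k1 \<cdot> g z" using g_coset h_in_H by blast
  obtain k2 where k2: "k2 \<in> H" "g (h2 \<cdot> z) = k2 \<cdot> g z" using g_coset h2_in_H by blast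
  have hz: "h \<cdot> z \<in> Q" "h2 \<cdot> z \<in> Q" using mult_closed h_closed h2_closed z by auto
  have "k1 \<noteq> e" using k1 gz inj_onD[OF g_inj _ hz(1) z] h_mult_ne[OF z] by auto
  moreover have "k2 \<noteq> e" using k2 gz inj_onD[OF g_inj _ hz(2) z] h2_mult_ne[OF z] by auto
  moreover have "k1 \<noteq> k2" using k1 k2 inj_onD[OF g_inj _ hz] h_mult_ne_h2_mult[OF z] by auto
  ultimately show ?thesis using k1 k2 H_eq by auto
qed

lemma left_mult_coset_dichotomy:
  assumes x: "x \<in> Q" and z: "z \<in> Q"
  shows "(x \<cdot> (h \<cdot> z) = h \<cdot> (x \<cdot> z) \<and> x \<cdot> (h2 \<cdot> z) = h2 \<cdot> (x \<cdot> z)) \<or>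
         (x \<cdot> (h \<cdot> z) = h2 \<cdot> (x \<cdot> z) \<and> x \<cdot> (h2 \<cdot> z) = h \<cdot> (x \<cdot> z))"
  using coset_map_dichotomy[of "\<lambda>u. x \<cdot> u" z] normal_left_mult_coset[OF normal x z]
    bij_betw_imp_inj_on[OF bij_left_mult[OF x]] z mult_closed[OF x z] by blast

lemma right_mult_coset_dichotomy:
  assumes x: "x \<in> Q" and z: "z \<in> Q"
  shows "((h \<cdot> z) \<cdot> x = h \<cdot> (z \<cdot> x) \<and> (h2 \<cdot> z) \<cdot> x = h2 \<cdot> (z \<cdot> x)) \<or>
         ((h \<cdot> z) \<cdot> x = h2 \<cdot> (z \<cdot> x) \<and> (h2 \<cdot> z) \<cdot> x = h \<cdot> (z \<cdot> x))"
  using coset_map_dichotomy[of "\<lambda>u. u \<cdot> x" z] normal_right_mult_coset[OF normal x z]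
    bij_betw_imp_inj_on[OF bij_right_mult[OF x]] z mult_closed[OF z x] by blast

end

section \<open>Centrality in right Bol loops of odd order\<close>

locale bol_order3 = finite_right_bol_loop + order3_normal +
  assumes odd_card: "odd (card Q)"
begin

text \<open>If right multiplication by \<open>h y\<close> interchanged \<open>h\<close> and \<open>h2\<close> on \<open>H y\<^sup>q\<close>, the right
  Bol law for \<open>((h y\<^sup>q) (h y)) y\<^sup>q\<close> would give \<open>h2 = h\<close>.\<close>

lemma right_mult_h_power_commutes:
  assumes y: "y \<in> Q" and a: "a = h \<or> a = h2"
  shows "(a \<cdot> rpow y q) \<cdot> (h \<cdot> y) = a \<cdot> (rpow y q \<cdot> (h \<cdot> y))"
proof -
  define p w where "p = rpow y q" and "w = h \<cdot> y"
  have p: "p \<in> Q" and w: "w \<in> Q"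
    unfolding p_def w_def using rpow_closed y mult_closed h_closed by auto
  obtain k where k: "k \<in> H" "p \<cdot> w = k \<cdot> rpow y (Suc q)"
    using normal_left_mult_coset[OF normal p y h_in_H] unfolding p_def w_def rpow_Suc by blast
  have kQ: "k \<in> Q" using k H_subset by blast
  have pwp: "(p \<cdot> w) \<cdot> p = k \<cdot> rpow y (Suc q + q)"
    using k mult_rpow_add[OF y kQ, of "Suc q" q] unfolding p_def by simp
  have swap_impossible: "(h \<cdot> p) \<cdot> w \<noteq> h2 \<cdot> (p \<cdot> w)"
  proof
    assume swapped: "(h \<cdot> p) \<cdot> w = h2 \<cdot> (p \<cdot> w)"
    have "(h2 \<cdot> k) \<cdot> rpow y (Suc q + q) = ((h \<cdot> p) \<cdot> w) \<cdot> p"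
      using swapped k H_mult_assoc[OF h2_in_H k(1) rpow_closed[OF y]]
        mult_rpow_add[OF y mult_closed[OF h2_closed kQ]] unfolding p_def by simp
    also have "\<dots> = h \<cdot> ((p \<cdot> w) \<cdot> p)"
      using right_bol_law h_closed p w by blast
    also have "\<dots> = (h \<cdot> k) \<cdot> rpow y (Suc q + q)"
      using pwp H_mult_assoc[OF h_in_H k(1) rpow_closed[OF y]] by simp
    finally have "h2 \<cdot> k = h \<cdot> k"
      using right_cancel rpow_closed[OF y] mult_closed h2_closed h_closed kQ by blast
    then show False
      using right_cancel[OF kQ h2_closed h_closed] h2_ne_h by blast
  qed
  show ?thesis
    using a right_mult_coset_dichotomy[OF w p] swap_impossible unfolding p_def w_def by auto
qed

text \<open>\<open>h_shift y i\<close> is the element \<open>s \<in> {h, h2}\<close> with \<open>y\<^sup>i (h y) = s y\<^sup>i\<^sup>+\<^sup>1\<close>; the \<open>else\<close>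
  branch is justified by \<open>left_mult_coset_dichotomy\<close>.\<close>

definition h_shift :: "'a \<Rightarrow> nat \<Rightarrow> 'a" where
  "h_shift y i = (if rpow y i \<cdot> (h \<cdot> y) = h \<cdot> rpow y (Suc i) then h else h2)"

lemma h_shift_cases: "h_shift y i = h \<or> h_shift y i = h2"
  unfolding h_shift_def by simp

lemma h_shift_in_H: "h_shift y i \<in> H"
  using h_shift_cases h_in_H h2_in_H by metis

lemma rpow_mult_h_mult_rpow:
  assumes y: "y \<in> Q" and a: "a = h \<or> a = h2"
  shows "rpow y i \<cdot> (a \<cdot> rpow y k) = h \<cdot> rpow y (i + k) \<or>
         rpow y i \<cdot> (a \<cdot> rpow y k) = h2 \<cdot> rpow y (i + k)"
  using a left_mult_coset_dichotomy[OF rpow_closed[OF y] rpow_closed[OF y], of i k] rpow_add[OF y]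
  by auto

lemma rpow_mult_h_mult: "y \<in> Q \<Longrightarrow> rpow y i \<cdot> (h \<cdot> y) = h_shift y i \<cdot> rpow y (Suc i)"
  using rpow_mult_h_mult_rpow[of y h i 1] unfolding h_shift_def by auto

lemma h_shift_0: "y \<in> Q \<Longrightarrow> h_shift y 0 = h"
  unfolding h_shift_def by (simp add: mult_closed h_closed)

lemma h_shift_rorder: "y \<in> Q \<Longrightarrow> h_shift y (rorder y) = h"
  unfolding h_shift_def using rpow_Suc[of y "rorder y"]
  by (simp add: rpow_rorder mult_closed h_closed)

lemma rpow_mult_h_mult_twice:
  assumes y: "y \<in> Q"
  shows "(rpow y i \<cdot> (h \<cdot> y)) \<cdot> (h \<cdot> y) = (h_shift y i \<cdot> h_shift y (Suc i)) \<cdot> rpow y (Suc (Suc i))"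
proof -
  have "(rpow y i \<cdot> (h \<cdot> y)) \<cdot> (h \<cdot> y) = (h_shift y i \<cdot> rpow y (Suc i)) \<cdot> (h \<cdot> y)"
    using rpow_mult_h_mult[OF y] by simp
  also have "\<dots> = h_shift y i \<cdot> (rpow y (Suc i) \<cdot> (h \<cdot> y))"
    using right_mult_h_power_commutes[OF y h_shift_cases] by simp
  also have "\<dots> = (h_shift y i \<cdot> h_shift y (Suc i)) \<cdot> rpow y (Suc (Suc i))"
    using rpow_mult_h_mult[OF y] H_mult_assoc h_shift_in_H rpow_closed[OF y] by simp
  finally show ?thesis .
qed

lemma h_mult_square:
  assumes y: "y \<in> Q"
  shows "(h \<cdot> y) \<cdot> (h \<cdot> y) = (h \<cdot> h_shift y 1) \<cdot> rpow y 2"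
proof -
  have "(h \<cdot> y) \<cdot> (h \<cdot> y) = h \<cdot> (rpow y 1 \<cdot> (h \<cdot> y))"
    using right_mult_h_power_commutes[OF y, of h 1] y by simp
  also have "\<dots> = (h \<cdot> h_shift y 1) \<cdot> rpow y 2"
    using rpow_mult_h_mult[OF y, of 1] H_mult_assoc[OF h_in_H h_shift_in_H rpow_closed[OF y]]
    by (simp add: numeral_2_eq_2)
  finally show ?thesis .
qed

text \<open>Compare \<open>(y\<^sup>i w) w\<close> with \<open>y\<^sup>i (w w)\<close> for \<open>w = h y\<close>, using the right alternative law.\<close>

lemma h_shift_mult_eq_unit_iff:
  assumes y: "y \<in> Q"
  shows "h_shift y i \<cdot> h_shift y (Suc i) = e \<longleftrightarrow> h_shift y 1 = h2"
proof -
  define s where "s = h_shift y"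
  have sQ: "s j \<in> Q" for j unfolding s_def using h_shift_in_H H_subset by blast
  have pQ: "rpow y j \<in> Q" for j using rpow_closed[OF y] .
  have "(s i \<cdot> s (Suc i)) \<cdot> rpow y (Suc (Suc i)) = rpow y i \<cdot> ((h \<cdot> s 1) \<cdot> rpow y 2)"
    using rpow_mult_h_mult_twice[OF y, of i] h_mult_square[OF y] right_alternative pQ
      mult_closed h_closed y unfolding s_def by metis
  also have "\<dots> = (if s 1 = h2 then rpow y (Suc (Suc i)) else rpow y i \<cdot> (h2 \<cdot> rpow y 2))"
    using h_shift_cases[of y 1] pQ
    by (auto simp: s_def h_mult_h h_mult_h2 rpow_add[OF y] numeral_2_eq_2)
  finally have shifts: "(s i \<cdot> s (Suc i)) \<cdot> rpow y (Suc (Suc i))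
      = (if s 1 = h2 then rpow y (Suc (Suc i)) else rpow y i \<cdot> (h2 \<cdot> rpow y 2))" .
  show ?thesis
  proof (cases "s 1 = h2")
    case True
    then have "(s i \<cdot> s (Suc i)) \<cdot> rpow y (Suc (Suc i)) = e \<cdot> rpow y (Suc (Suc i))"
      using shifts pQ by simp
    then show ?thesis
      using True right_cancel[OF pQ] mult_closed sQ unit_closed unfolding s_def by blast
  next
    case False
    have "rpow y i \<cdot> (h2 \<cdot> rpow y 2) \<noteq> rpow y (Suc (Suc i))"
      using rpow_mult_h_mult_rpow[OF y, of h2 i 2] h_mult_ne h2_mult_ne pQ
      by (auto simp: numeral_2_eq_2)
    then show ?thesis
      using shifts False pQ unfolding s_def by auto
  qed
qed

lemma h_shift_1: "y \<in> Q \<Longrightarrow> h_shift y 1 = h"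
proof (rule ccontr)
  assume y: "y \<in> Q" and "h_shift y 1 \<noteq> h"
  then have alternating: "h_shift y i \<cdot> h_shift y (Suc i) = e" for i
    using h_shift_mult_eq_unit_iff[OF y] h_shift_cases by blast
  have "h_shift y i = (if even i then h else h2)" for i
  proof (induction i)
    case (Suc i)
    then show ?case
      using alternating[of i] h_shift_cases[of y "Suc i"] h_mult_h h2_mult_h2
        h_ne_unit h2_ne_unit by (auto split: if_splits)
  qed (simp add: h_shift_0[OF y])
  then show False
    using h_shift_rorder[OF y] odd_rorder[OF y odd_card] h2_ne_h by simp
qed

lemma h_shift_eq_h: "y \<in> Q \<Longrightarrow> h_shift y i = h"
proof (induction i)
  case (Suc i)
  then show ?case
    using h_shift_mult_eq_unit_iff[of y i] h_shift_1 h2_ne_h h_mult_h h_shift_cases[of y "Suc i"]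
      h_mult_h2 by auto
qed (rule h_shift_0)

text \<open>With \<open>w = h y\<close> and \<open>rorder y = 2 j + 1\<close>, both sides of the right Bol law for
  \<open>((y y\<^sup>j) w) y\<^sup>j\<close> can be evaluated, giving \<open>h y\<close> on the left and \<open>y h\<close> on the right.\<close>

lemma h_commutes: assumes y: "y \<in> Q" shows "y \<cdot> h = h \<cdot> y"
proof -
  define j where "j = rorder y div 2"
  have M: "rorder y = Suc (2 * j)"
    unfolding j_def using odd_two_times_div_two_succ[OF odd_rorder[OF y odd_card]] by simp
  have shift: "rpow y i \<cdot> (h \<cdot> y) = h \<cdot> rpow y (Suc i)" for i
    using rpow_mult_h_mult[OF y] h_shift_eq_h[OF y] by simp
  have "rpow y (Suc (rorder y)) = y"
    using y by (simp add: rpow_Suc rpow_rorder)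
  then have "h \<cdot> y = (h \<cdot> rpow y (Suc (Suc j))) \<cdot> rpow y j"
    using mult_rpow_add[OF y h_closed, of "Suc (Suc j)" j] M by (simp add: mult_2)
  also have "\<dots> = ((y \<cdot> rpow y j) \<cdot> (h \<cdot> y)) \<cdot> rpow y j"
    using rpow_add[OF y, of 1 j] shift[of "Suc j"] y by simp
  also have "\<dots> = y \<cdot> ((rpow y j \<cdot> (h \<cdot> y)) \<cdot> rpow y j)"
    using right_bol_law y rpow_closed[OF y] mult_closed h_closed by blast
  also have "\<dots> = y \<cdot> h"
    using shift[of j] mult_rpow_add[OF y h_closed, of "Suc j" j] M rpow_rorder[OF y] h_closed
    by (simp add: mult_2)
  finally show ?thesis ..
qed

text \<open>The right Bol law for \<open>((z h) w) h\<close>, rewritten with \<open>h_commutes\<close>, ties right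
  multiplication by \<open>w\<close> on \<open>H z\<close> to left multiplication by \<open>z\<close> on \<open>H w\<close>; only the commuting
  case is consistent with both dichotomies.\<close>

lemma h_associates:
  assumes z: "z \<in> Q" and w: "w \<in> Q"
  shows "(h \<cdot> z) \<cdot> w = h \<cdot> (z \<cdot> w)" and "z \<cdot> (h \<cdot> w) = h \<cdot> (z \<cdot> w)"
proof -
  have zw: "z \<cdot> w \<in> Q" using mult_closed z w by blast
  have hw: "h \<cdot> w \<in> Q" using mult_closed h_closed w by blast
  have move_h: "(a \<cdot> (z \<cdot> w)) \<cdot> h = (h \<cdot> a) \<cdot> (z \<cdot> w)" if "a \<in> H" for a
    using h_commutes[OF mult_closed[OF _ zw]] H_mult_assoc[OF h_in_H that zw] that H_subset by auto
  have bol: "((h \<cdot> z) \<cdot> w) \<cdot> h = z \<cdot> (h2 \<cdot> w)"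
  proof -
    have "((z \<cdot> h) \<cdot> w) \<cdot> h = z \<cdot> ((h \<cdot> w) \<cdot> h)"
      using right_bol_law z w h_closed by blast
    then show ?thesis
      using h_commutes[OF z] h_commutes[OF hw] h_mult_h_mult[OF w] by simp
  qed
  have "(h \<cdot> z) \<cdot> w = h \<cdot> (z \<cdot> w) \<and> z \<cdot> (h \<cdot> w) = h \<cdot> (z \<cdot> w)"
  proof (cases "(h \<cdot> z) \<cdot> w = h \<cdot> (z \<cdot> w)")
    case True
    then have "z \<cdot> (h2 \<cdot> w) = h2 \<cdot> (z \<cdot> w)"
      using bol move_h[OF h_in_H] h_mult_h by simp
    then show ?thesis
      using True left_mult_coset_dichotomy[OF z w] h_mult_ne_h2_mult[OF zw] by auto
  next
    case False
    then have "(h \<cdot> z) \<cdot> w = h2 \<cdot> (z \<cdot> w)"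
      using right_mult_coset_dichotomy[OF w z] by auto
    then have "z \<cdot> (h2 \<cdot> w) = z \<cdot> w"
      using bol move_h[OF h2_in_H] h_mult_h2 zw by simp
    then show ?thesis
      using left_mult_coset_dichotomy[OF z w] h_mult_ne[OF zw] h2_mult_ne[OF zw] by auto
  qed
  then show "(h \<cdot> z) \<cdot> w = h \<cdot> (z \<cdot> w)" and "z \<cdot> (h \<cdot> w) = h \<cdot> (z \<cdot> w)"
    by auto
qed

lemma h_in_center: "h \<in> center Q (\<cdot>)"
proof -
  have "h \<in> nucleus Q (\<cdot>)"
    unfolding nucleus_def
  proof (intro CollectI conjI ballI)
    fix y z assume y: "y \<in> Q" and z: "z \<in> Q"
    show "h \<cdot> (y \<cdot> z) = h \<cdot> y \<cdot> z"
      using h_associates(1)[OF y z] by simp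
    show "y \<cdot> (h \<cdot> z) = y \<cdot> h \<cdot> z"
      using h_associates[OF y z] h_commutes[OF y] by simp
    show "y \<cdot> (z \<cdot> h) = y \<cdot> z \<cdot> h"
      using h_associates(2)[OF y z] h_commutes[OF z] h_commutes[OF mult_closed[OF y z]] by simp
  qed (rule h_closed)
  then show ?thesis
    unfolding center_def using h_commutes by auto
qed

end

lemma (in finite_right_bol_loop) normal_order3_subset_center:
  assumes "normal_subloop H Q (\<cdot>) e" "card H = 3" "odd (card Q)"
  shows "H \<subseteq> center Q (\<cdot>)"
proof
  fix k assume k: "k \<in> H"
  show "k \<in> center Q (\<cdot>)"
  proof (cases "k = e")
    case True
    then show ?thesis
      using unit_in_center by simp
  next
    case False
    interpret bol_order3 Q "(\<cdot>)" e H k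
      by unfold_locales (use assms k False in blast)+
    show ?thesis by (rule h_in_center)
  qed
qed

section \<open>The opposite loop\<close>

lemma loop_opposite: "loop Q m e \<Longrightarrow> loop Q (\<lambda>a b. m b a) e"
  unfolding loop_def by blast

lemma right_bol_opposite: "left_bol Q m \<Longrightarrow> right_bol Q (\<lambda>a b. m b a)"
  unfolding left_bol_def right_bol_def by blast

lemma trans_opposite:
  "ltrans Q (\<lambda>a b. m b a) = rtrans Q m" "rtrans Q (\<lambda>a b. m b a) = ltrans Q m"
  "ltrans_inv Q (\<lambda>a b. m b a) = rtrans_inv Q m" "rtrans_inv Q (\<lambda>a b. m b a) = ltrans_inv Q m"
  by (rule ext, simp add: ltrans_def rtrans_def ltrans_inv_def rtrans_inv_def)+

lemma mlt_group_opposite: "mlt_group Q (\<lambda>a b. m b a) = mlt_group Q m"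
proof -
  have "f \<in> mlt_group Q m" if "f \<in> mlt_group Q (\<lambda>a b. m b a)" for f
    using that by induction (metis trans_opposite mlt_group.intros)+
  moreover have "f \<in> mlt_group Q (\<lambda>a b. m b a)" if "f \<in> mlt_group Q m" for f
    using that by induction (metis trans_opposite mlt_group.intros)+
  ultimately show ?thesis by blast
qed

lemma subloop_opposite: "subloop H Q (\<lambda>a b. m b a) e = subloop H Q m e"
  unfolding subloop_def by blast

lemma normal_subloop_opposite:
  "normal_subloop H Q m e \<Longrightarrow> normal_subloop H Q (\<lambda>a b. m b a) e"
  by (simp add: normal_subloop_def inn_group_def subloop_opposite[of H Q m e] mlt_group_opposite[of Q m])

lemma center_opposite_subset: "center Q (\<lambda>a b. m b a) \<subseteq> center Q m"
proof
  fix x assume x: "x \<in> center Q (\<lambda>a b. m b a)"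
  then have "x \<in> Q" unfolding center_def nucleus_def by blast
  have comm: "m x y = m y x" if "y \<in> Q" for y
    using x that unfolding center_def by (simp add: eq_commute)
  have assoc: "m (m z y) x = m z (m y x) \<and> m (m z x) y = m z (m x y) \<and> m (m x z) y = m x (m z y)"
    if "y \<in> Q" "z \<in> Q" for y z
    using x that unfolding center_def nucleus_def by blast
  have "x \<in> nucleus Q m"
    unfolding nucleus_def using \<open>x \<in> Q\<close> assoc by simp
  with comm show "x \<in> center Q m"
    unfolding center_def by simp
qed

theorem theorem4p12:
  fixes Q H :: "'a set" and m :: "'a \<Rightarrow> 'a \<Rightarrow> 'a" and e :: 'a
  assumes "loop Q m e"
    and "right_bol Q m \<or> left_bol Q m"
    and "finite Q" and "odd (card Q)"
    and "normal_subloop H Q m e" and "card H = 3"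
  shows "H \<subseteq> center Q m"
  using assms(2)
proof
  assume "right_bol Q m"
  then interpret finite_right_bol_loop Q m e
    using assms(1,3) by unfold_locales
  show ?thesis
    using normal_order3_subset_center[OF assms(5,6,4)] .
next
  assume "left_bol Q m"
  then interpret opposite: finite_right_bol_loop Q "\<lambda>a b. m b a" e
    using loop_opposite[OF assms(1)] right_bol_opposite assms(3) by unfold_locales
  have "H \<subseteq> center Q (\<lambda>a b. m b a)"
    using opposite.normal_order3_subset_center[OF normal_subloop_opposite[OF assms(5)] assms(6,4)] .
  then show ?thesis
    using center_opposite_subset by (rule subset_trans)
qed

end
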